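(* Let $\Gamma$ be a finite connected $(G,2)$-distance-transitive graph of valency $k\ge2$, and suppose $\gcd(c_2,k-1)=1$. Then either $\Gamma$ has girth $3$ or $\Gamma$ is $(G,2)$-arc-transitive.
   Context: For $G\le\mathrm{Aut}(\Gamma)$, $\Gamma$ is $(G,2)$-distance-transitive if its diameter is at least $2$, $G$ is vertex-transitive and $G_u$ is transitive on $\Gamma(u)$ and $\Gamma_2(u)$ for each $u$. $c_2$ is the number of common neighbours of two vertices at distance $2$. $\Gamma$ is $(G,2)$-arc-transitive if $G$ is transitive on vertices and on $2$-arcs (triples $(u_0,u_1,u_2)$ with $u_0\sim u_1\sim u_2$, $u_0\ne u_2$). *)

theory Defs
  imports "HOL-Combinatorics.Permutations"
begin

definition simple_graph :: "'a set \<Rightarrow> ('a \<Rightarrow> 'a \<Rightarrow> bool) \<Rightarrow> bool" where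
  "simple_graph V E \<longleftrightarrow> finite V \<and> (\<forall>x y. E x y \<longrightarrow> x \<in> V \<and> y \<in> V)
     \<and> (\<forall>x y. E x y \<longrightarrow> E y x) \<and> (\<forall>x. \<not> E x x)"

definition nbrs :: "('a \<Rightarrow> 'a \<Rightarrow> bool) \<Rightarrow> 'a \<Rightarrow> 'a set" where
  "nbrs E u = {v. E u v}"

definition connected_graph :: "'a set \<Rightarrow> ('a \<Rightarrow> 'a \<Rightarrow> bool) \<Rightarrow> bool" where
  "connected_graph V E \<longleftrightarrow> (\<forall>u\<in>V. \<forall>v\<in>V. \<exists>n. (E ^^ n) u v)"

definition gdist :: "('a \<Rightarrow> 'a \<Rightarrow> bool) \<Rightarrow> 'a \<Rightarrow> 'a \<Rightarrow> nat" where
  "gdist E u v = (LEAST n. (E ^^ n) u v)"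

definition sphere :: "'a set \<Rightarrow> ('a \<Rightarrow> 'a \<Rightarrow> bool) \<Rightarrow> nat \<Rightarrow> 'a \<Rightarrow> 'a set" where
  "sphere V E i u = {v \<in> V. gdist E u v = i}"

definition diameter :: "'a set \<Rightarrow> ('a \<Rightarrow> 'a \<Rightarrow> bool) \<Rightarrow> nat" where
  "diameter V E = Max {gdist E u v | u v. u \<in> V \<and> v \<in> V}"

definition regular :: "'a set \<Rightarrow> ('a \<Rightarrow> 'a \<Rightarrow> bool) \<Rightarrow> nat \<Rightarrow> bool" where
  "regular V E k \<longleftrightarrow> (\<forall>v\<in>V. card (nbrs E v) = k)"

definition is_cycle :: "'a set \<Rightarrow> ('a \<Rightarrow> 'a \<Rightarrow> bool) \<Rightarrow> 'a list \<Rightarrow> bool" where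
  "is_cycle V E xs \<longleftrightarrow> length xs \<ge> 3 \<and> distinct xs \<and> set xs \<subseteq> V \<and>
     (\<forall>i < length xs. E (xs ! i) (xs ! ((i + 1) mod length xs)))"

definition girth :: "'a set \<Rightarrow> ('a \<Rightarrow> 'a \<Rightarrow> bool) \<Rightarrow> nat" where
  "girth V E = Inf {length xs | xs. is_cycle V E xs}"

definition graph_aut :: "'a set \<Rightarrow> ('a \<Rightarrow> 'a \<Rightarrow> bool) \<Rightarrow> ('a \<Rightarrow> 'a) \<Rightarrow> bool" where
  "graph_aut V E g \<longleftrightarrow> g permutes V \<and> (\<forall>x\<in>V. \<forall>y\<in>V. E x y \<longleftrightarrow> E (g x) (g y))"

definition aut_subgroup :: "'a set \<Rightarrow> ('a \<Rightarrow> 'a \<Rightarrow> bool) \<Rightarrow> ('a \<Rightarrow> 'a) set \<Rightarrow> bool" where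
  "aut_subgroup V E G \<longleftrightarrow> (\<forall>g\<in>G. graph_aut V E g) \<and> id \<in> G
     \<and> (\<forall>g\<in>G. \<forall>h\<in>G. g \<circ> h \<in> G) \<and> (\<forall>g\<in>G. inv g \<in> G)"

definition vertex_transitive :: "'a set \<Rightarrow> ('a \<Rightarrow> 'a) set \<Rightarrow> bool" where
  "vertex_transitive V G \<longleftrightarrow> (\<forall>u\<in>V. \<forall>v\<in>V. \<exists>g\<in>G. g u = v)"

definition stab_transitive_on :: "('a \<Rightarrow> 'a) set \<Rightarrow> 'a \<Rightarrow> 'a set \<Rightarrow> bool" where
  "stab_transitive_on G u S \<longleftrightarrow> (\<forall>v\<in>S. \<forall>w\<in>S. \<exists>g\<in>G. g u = u \<and> g v = w)"

definition two_distance_transitive ::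
  "'a set \<Rightarrow> ('a \<Rightarrow> 'a \<Rightarrow> bool) \<Rightarrow> ('a \<Rightarrow> 'a) set \<Rightarrow> bool" where
  "two_distance_transitive V E G \<longleftrightarrow> diameter V E \<ge> 2 \<and> vertex_transitive V G \<and>
     (\<forall>u\<in>V. stab_transitive_on G u (sphere V E 1 u) \<and> stab_transitive_on G u (sphere V E 2 u))"

definition two_arc :: "('a \<Rightarrow> 'a \<Rightarrow> bool) \<Rightarrow> 'a \<times> 'a \<times> 'a \<Rightarrow> bool" where
  "two_arc E t \<longleftrightarrow> (case t of (u0, u1, u2) \<Rightarrow> E u0 u1 \<and> E u1 u2 \<and> u0 \<noteq> u2)"

definition two_arc_transitive ::
  "'a set \<Rightarrow> ('a \<Rightarrow> 'a \<Rightarrow> bool) \<Rightarrow> ('a \<Rightarrow> 'a) set \<Rightarrow> bool" where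
  "two_arc_transitive V E G \<longleftrightarrow> vertex_transitive V G \<and>
     (\<forall>u0 u1 u2 v0 v1 v2. two_arc E (u0, u1, u2) \<longrightarrow> two_arc E (v0, v1, v2) \<longrightarrow>
        (\<exists>g\<in>G. g u0 = v0 \<and> g u1 = v1 \<and> g u2 = v2))"

end

theory Submission
  imports Defs
begin

text \<open>
  If \<Gamma> has a triangle its girth is 3. Otherwise, fix an arc (v0, v1) and
  x \<in> \<Gamma>(v1) - {v0}. Each vertex of \<Gamma>_2(v0) is reached from v0 by exactly c2
  paths of length 2, so k(k - 1) = |\<Gamma>_2(v0)| c2. Double counting the G_v0-orbit
  of the pair (v1, x) inside \<Gamma>(v0) \<times> \<Gamma>_2(v0), using that G_v0 is transitive on both
  spheres, gives k m = |\<Gamma>_2(v0)| j, where m is the length of the G_v0v1-orbit of x.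
  Hence m c2 = (k - 1) j, and as c2 is prime to k - 1, the positive number m \<le> k - 1
  is divisible by k - 1. So G_v0v1 is transitive on \<Gamma>(v1) - {v0}, which together with
  transitivity on vertices and arcs is 2-arc-transitivity.
\<close>

lemma double_count:
  fixes P :: "('a \<times> 'b) set"
  assumes "finite A" "finite B" "P \<subseteq> A \<times> B"
    and "\<forall>a\<in>A. card {b. (a, b) \<in> P} = m"
    and "\<forall>b\<in>B. card {a. (a, b) \<in> P} = n"
  shows "card A * m = card B * n"
proof -
  have "finite {b. (a, b) \<in> P}" for a
    using assms(2,3) by (auto intro: finite_subset[of _ B])
  moreover have "P = Sigma A (\<lambda>a. {b. (a, b) \<in> P})"
    using assms(3) by auto
  ultimately have "card P = (\<Sum>a\<in>A. card {b. (a, b) \<in> P})"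
    using card_SigmaI[OF assms(1)] by metis
  also have "\<dots> = card A * m"
    using assms(4) by simp
  finally have A: "card P = card A * m" .
  have "finite {a. (a, b) \<in> P}" for b
    using assms(1,3) by (auto intro: finite_subset[of _ A])
  moreover have "prod.swap ` P = Sigma B (\<lambda>b. {a. (a, b) \<in> P})"
    using assms(3) by force
  ultimately have "card (prod.swap ` P) = (\<Sum>b\<in>B. card {a. (a, b) \<in> P})"
    using card_SigmaI[OF assms(2)] by metis
  also have "\<dots> = card B * n"
    using assms(5) by simp
  finally show ?thesis
    using A by (simp add: card_image)
qed

lemma eq_if_coprime_mult_eq:
  fixes m n c j :: nat
  assumes "m * c = n * j" "coprime n c" "0 < m" "m \<le> n"
  shows "m = n"
proof -
  have "n dvd m * c" using assms(1) by simp
  hence "n dvd m" using assms(2) coprime_dvd_mult_left_iff by blast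
  thus ?thesis using assms(3,4) dvd_imp_le by (simp add: le_antisym)
qed

subsection \<open>Groups of bijections and orbits of pairs\<close>

definition bij_group :: "('a \<Rightarrow> 'a) set \<Rightarrow> bool" where
  "bij_group S \<longleftrightarrow> id \<in> S \<and> (\<forall>g\<in>S. bij g \<and> inv g \<in> S) \<and> (\<forall>g\<in>S. \<forall>h\<in>S. g \<circ> h \<in> S)"

definition stabiliser :: "('a \<Rightarrow> 'a) set \<Rightarrow> 'a \<Rightarrow> ('a \<Rightarrow> 'a) set" where
  "stabiliser S u = {g \<in> S. g u = u}"

definition pair_orbit :: "('a \<Rightarrow> 'a) set \<Rightarrow> 'a \<Rightarrow> 'a \<Rightarrow> ('a \<times> 'a) set" where
  "pair_orbit S a b = {(g a, g b) | g. g \<in> S}"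

lemma bij_group_stabiliser:
  assumes "bij_group S"
  shows "bij_group (stabiliser S u)"
proof -
  have "inv g u = u" if "g \<in> S" "g u = u" for g
    using that assms bij_is_inj inv_f_f unfolding bij_group_def by metis
  thus ?thesis using assms unfolding bij_group_def stabiliser_def by auto
qed

lemma pair_orbit_fibre_image:
  assumes S: "bij_group S" and h: "h \<in> S"
  shows "{y. (h a, y) \<in> pair_orbit S a b} = h ` {y. (a, y) \<in> pair_orbit S a b}"
proof
  show "h ` {y. (a, y) \<in> pair_orbit S a b} \<subseteq> {y. (h a, y) \<in> pair_orbit S a b}"
  proof
    fix z assume "z \<in> h ` {y. (a, y) \<in> pair_orbit S a b}"
    then obtain g where g: "g \<in> S" "g a = a" "z = h (g b)"
      unfolding pair_orbit_def by auto
    have "h \<circ> g \<in> S" using S h g by (simp add: bij_group_def)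
    moreover have "(h a, z) = ((h \<circ> g) a, (h \<circ> g) b)" using g by simp
    ultimately show "z \<in> {y. (h a, y) \<in> pair_orbit S a b}"
      unfolding pair_orbit_def by blast
  qed
next
  have "bij h" "inv h \<in> S" using S h by (auto simp: bij_group_def)
  show "{y. (h a, y) \<in> pair_orbit S a b} \<subseteq> h ` {y. (a, y) \<in> pair_orbit S a b}"
  proof
    fix z assume "z \<in> {y. (h a, y) \<in> pair_orbit S a b}"
    then obtain g where g: "g \<in> S" "g a = h a" "z = g b"
      unfolding pair_orbit_def by auto
    define g' where "g' = inv h \<circ> g"
    have "g' \<in> S" using S g(1) \<open>inv h \<in> S\<close> by (simp add: bij_group_def g'_def)
    moreover have "g' a = a"
      using g(2) \<open>bij h\<close> by (simp add: g'_def bij_is_inj)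
    ultimately have "(a, g' b) \<in> pair_orbit S a b"
      unfolding pair_orbit_def by (intro CollectI exI[of _ g']) simp
    moreover have "z = h (g' b)"
      using g(3) \<open>bij h\<close> by (simp add: g'_def bij_is_surj surj_f_inv_f)
    ultimately show "z \<in> h ` {y. (a, y) \<in> pair_orbit S a b}" by blast
  qed
qed

lemma pair_orbit_swap: "(x, y) \<in> pair_orbit S a b \<longleftrightarrow> (y, x) \<in> pair_orbit S b a"
  unfolding pair_orbit_def by blast

lemma card_pair_orbit_fibre:
  assumes "bij_group S" "h \<in> S"
  shows "card {y. (h a, y) \<in> pair_orbit S a b} = card {y. (a, y) \<in> pair_orbit S a b}"
proof -
  have "inj h" using assms by (simp add: bij_group_def bij_is_inj)
  thus ?thesis using pair_orbit_fibre_image[OF assms] by (simp add: card_image inj_on_subset)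
qed

text \<open>
  If S is transitive on A \<ni> a and on B \<ni> b, the orbit of (a, b) is a biregular
  relation between A and B.
\<close>
lemma card_pair_orbit_double_count:
  assumes S: "bij_group S" and fin: "finite A" "finite B"
    and sub: "pair_orbit S a b \<subseteq> A \<times> B"
    and transA: "\<forall>x\<in>A. \<exists>h\<in>S. h a = x" and transB: "\<forall>y\<in>B. \<exists>h\<in>S. h b = y"
  shows "card A * card {y. (a, y) \<in> pair_orbit S a b}
       = card B * card {x. (x, b) \<in> pair_orbit S a b}"
proof (rule double_count[OF fin sub])
  show "\<forall>x\<in>A. card {y. (x, y) \<in> pair_orbit S a b} = card {y. (a, y) \<in> pair_orbit S a b}"
  proof
    fix x assume "x \<in> A"
    then obtain h where "h \<in> S" "h a = x" using transA by blast
    thus "card {y. (x, y) \<in> pair_orbit S a b} = card {y. (a, y) \<in> pair_orbit S a b}"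
      using card_pair_orbit_fibre[OF S, of h a b] by simp
  qed
  show "\<forall>y\<in>B. card {x. (x, y) \<in> pair_orbit S a b} = card {x. (x, b) \<in> pair_orbit S a b}"
  proof
    fix y assume "y \<in> B"
    then obtain h where "h \<in> S" "h b = y" using transB by blast
    thus "card {x. (x, y) \<in> pair_orbit S a b} = card {x. (x, b) \<in> pair_orbit S a b}"
      using card_pair_orbit_fibre[OF S, of h b a] by (simp add: pair_orbit_swap)
  qed
qed

subsection \<open>Simple graphs\<close>

definition triangle_free :: "('a \<Rightarrow> 'a \<Rightarrow> bool) \<Rightarrow> bool" where
  "triangle_free E \<longleftrightarrow> (\<forall>a b c. E a b \<longrightarrow> E b c \<longrightarrow> \<not> E c a)"

context
  fixes V :: "'a set" and E :: "'a \<Rightarrow> 'a \<Rightarrow> bool"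
  assumes simple: "simple_graph V E"
begin

lemma edge_in_V: "E x y \<Longrightarrow> x \<in> V \<and> y \<in> V"
  using simple by (simp add: simple_graph_def)

lemma edge_sym: "E x y \<Longrightarrow> E y x"
  using simple by (simp add: simple_graph_def)

lemma edge_irrefl: "\<not> E x x"
  using simple by (simp add: simple_graph_def)

lemma finite_nbrs: "finite (nbrs E u)"
  using simple edge_in_V finite_subset[of "nbrs E u" V] by (auto simp: simple_graph_def nbrs_def)

lemma gdist_self: "gdist E u u = 0"
  unfolding gdist_def by (rule Least_equality) auto

lemma edge_in_sphere_1:
  assumes "E u v"
  shows "v \<in> sphere V E 1 u"
proof -
  have "gdist E u v = 1"
    unfolding gdist_def
  proof (rule Least_equality)
    show "(E ^^ 1) u v" using assms by auto
    show "1 \<le> n" if "(E ^^ n) u v" for n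
      using that assms edge_irrefl by (cases n) auto
  qed
  thus ?thesis using assms edge_in_V unfolding sphere_def by blast
qed

lemma gdist_eq_2:
  assumes "u \<noteq> v" "\<not> E u v" "E u w" "E w v"
  shows "gdist E u v = 2"
  unfolding gdist_def
proof (rule Least_equality)
  show "(E ^^ 2) u v" using assms by (auto simp: numeral_2_eq_2 relcompp_apply)
  show "2 \<le> n" if "(E ^^ n) u v" for n
  proof (rule ccontr)
    assume "\<not> 2 \<le> n"
    hence "n = 0 \<or> n = 1" by auto
    thus False using that assms(1,2) by auto
  qed
qed

lemma girth_eq_3_if_triangle:
  assumes "E a b" "E b c" "E c a"
  shows "girth V E = 3"
proof -
  have "is_cycle V E [a, b, c]"
    unfolding is_cycle_def
  proof (intro conjI allI impI)
    show "distinct [a, b, c]" using assms edge_irrefl by auto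
    show "set [a, b, c] \<subseteq> V" using assms edge_in_V by auto
    show "E ([a, b, c] ! i) ([a, b, c] ! ((i + 1) mod length [a, b, c]))"
      if "i < length [a, b, c]" for i
      using that assms by (auto simp: less_Suc_eq)
  qed simp
  hence "3 \<in> {length xs | xs. is_cycle V E xs}" by force
  thus ?thesis
    unfolding girth_def by (rule cInf_eq_minimum) (auto simp: is_cycle_def)
qed

lemma sphere_2_if_triangle_free:
  assumes "triangle_free E" "E u w" "E w v" "v \<noteq> u"
  shows "v \<in> sphere V E 2 u"
proof -
  have "\<not> E u v" using assms(1-3) edge_sym unfolding triangle_free_def by blast
  hence "gdist E u v = 2" using gdist_eq_2 assms(2-4) by metis
  thus ?thesis using assms(3) edge_in_V unfolding sphere_def by blast
qed

text \<open>
  Both sides count the paths u, w, v with v \<noteq> u; triangle-freeness puts each such v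
  in \<Gamma>_2(u).
\<close>
lemma card_sphere_2_mult_c2:
  assumes "triangle_free E" "regular V E k" "u \<in> V"
    and c2: "\<forall>v\<in>sphere V E 2 u. card (nbrs E u \<inter> nbrs E v) = c2"
  shows "k * (k - 1) = card (sphere V E 2 u) * c2"
proof -
  define Q where "Q = {(w, v). w \<in> nbrs E u \<and> v \<in> sphere V E 2 u \<and> E w v}"
  have finV: "finite V" using simple by (simp add: simple_graph_def)
  have "card (nbrs E u) * (k - 1) = card (sphere V E 2 u) * c2"
  proof (rule double_count[OF finite_nbrs _ _, of "sphere V E 2 u" Q])
    show "finite (sphere V E 2 u)" using finV by (simp add: sphere_def)
    show "Q \<subseteq> nbrs E u \<times> sphere V E 2 u" by (auto simp: Q_def)
    have "{v. (w, v) \<in> Q} = nbrs E w - {u}" if "w \<in> nbrs E u" for w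
      using that sphere_2_if_triangle_free[OF assms(1)]
      by (auto simp: Q_def nbrs_def sphere_def gdist_self)
    moreover have "card (nbrs E w - {u}) = k - 1" if "w \<in> nbrs E u" for w
      using that assms(2) edge_in_V edge_sym finite_nbrs
      by (simp add: nbrs_def regular_def)
    ultimately show "\<forall>w\<in>nbrs E u. card {v. (w, v) \<in> Q} = k - 1" by simp
    have "{w. (w, v) \<in> Q} = nbrs E u \<inter> nbrs E v" if "v \<in> sphere V E 2 u" for v
      using that edge_sym by (auto simp: Q_def nbrs_def)
    thus "\<forall>v\<in>sphere V E 2 u. card {w. (w, v) \<in> Q} = c2" using c2 by simp
  qed
  thus ?thesis using assms(2,3) by (simp add: regular_def)
qed

end

subsection \<open>Arc stabilisers in 2-distance-transitive graphs\<close>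

locale two_distance_transitive_graph =
  fixes V :: "'a set" and E :: "'a \<Rightarrow> 'a \<Rightarrow> bool" and G :: "('a \<Rightarrow> 'a) set" and k :: nat
  assumes simple: "simple_graph V E"
    and aut: "aut_subgroup V E G"
    and dist_trans: "two_distance_transitive V E G"
    and reg: "regular V E k"
begin

lemma bij_group_aut: "bij_group G"
  using aut permutes_bij unfolding aut_subgroup_def graph_aut_def bij_group_def by blast

lemma aut_edge:
  assumes "g \<in> G" "E x y"
  shows "E (g x) (g y)"
  using aut assms edge_in_V[OF simple] unfolding aut_subgroup_def graph_aut_def by blast

lemma aut_inj: "g \<in> G \<Longrightarrow> inj g"
  using bij_group_aut by (simp add: bij_group_def bij_is_inj)

lemma stabiliser_transitive_nbrs:
  assumes "E u v" "E u w"
  shows "\<exists>h\<in>stabiliser G u. h v = w"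
proof -
  have "stab_transitive_on G u (sphere V E 1 u)"
    using dist_trans assms(1) edge_in_V[OF simple] unfolding two_distance_transitive_def by blast
  thus ?thesis
    using edge_in_sphere_1[OF simple] assms unfolding stab_transitive_on_def stabiliser_def by blast
qed

lemma stabiliser_transitive_sphere_2:
  assumes "u \<in> V" "v \<in> sphere V E 2 u" "w \<in> sphere V E 2 u"
  shows "\<exists>h\<in>stabiliser G u. h v = w"
  using dist_trans assms
  unfolding two_distance_transitive_def stab_transitive_on_def stabiliser_def by blast

lemma pair_orbit_stabiliser_subset:
  assumes "triangle_free E" "E v0 v1" "x \<in> nbrs E v1 - {v0}"
  shows "pair_orbit (stabiliser G v0) v1 x \<subseteq> nbrs E v0 \<times> sphere V E 2 v0"
proof
  fix p assume "p \<in> pair_orbit (stabiliser G v0) v1 x"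
  then obtain g where g: "g \<in> G" "g v0 = v0" "p = (g v1, g x)"
    unfolding pair_orbit_def stabiliser_def by blast
  have "E v0 (g v1)" using aut_edge[OF g(1) assms(2)] g(2) by simp
  moreover have "E (g v1) (g x)" using aut_edge[OF g(1)] assms(3) by (simp add: nbrs_def)
  moreover have "g x \<noteq> v0"
    using injD[OF aut_inj[OF g(1)], of x v0] assms(3) g(2) by auto
  ultimately show "p \<in> nbrs E v0 \<times> sphere V E 2 v0"
    using sphere_2_if_triangle_free[OF simple assms(1)] g(3) by (simp add: nbrs_def)
qed

text \<open>The fibre of P over v1 is the G_v0v1-orbit of x.\<close>
lemma arc_stabiliser_orbit_count:
  assumes "triangle_free E" "k \<ge> 1" "E v0 v1" "x \<in> nbrs E v1 - {v0}"
    and c2: "\<forall>u\<in>V. \<forall>v\<in>V. gdist E u v = 2 \<longrightarrow> card (nbrs E u \<inter> nbrs E v) = c2"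
  defines "P \<equiv> pair_orbit (stabiliser G v0) v1 x"
  shows "card {y. (v1, y) \<in> P} * c2 = (k - 1) * card {w. (w, x) \<in> P}"
proof -
  have v0: "v0 \<in> V" using edge_in_V[OF simple assms(3)] by blast
  have x: "x \<in> sphere V E 2 v0"
    using sphere_2_if_triangle_free[OF simple assms(1,3)] assms(4) by (simp add: nbrs_def)
  have fin: "finite (sphere V E 2 v0)"
    using simple by (simp add: simple_graph_def sphere_def)
  define m where "m = card {y. (v1, y) \<in> P}"
  define j where "j = card {w. (w, x) \<in> P}"
  have "card (nbrs E v0) * m = card (sphere V E 2 v0) * j"
    unfolding P_def m_def j_def
  proof (rule card_pair_orbit_double_count[OF bij_group_stabiliser[OF bij_group_aut]
        finite_nbrs[OF simple] fin pair_orbit_stabiliser_subset[OF assms(1,3,4)]])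
    show "\<forall>w\<in>nbrs E v0. \<exists>h\<in>stabiliser G v0. h v1 = w"
      using stabiliser_transitive_nbrs assms(3) by (simp add: nbrs_def)
    show "\<forall>y\<in>sphere V E 2 v0. \<exists>h\<in>stabiliser G v0. h x = y"
      using stabiliser_transitive_sphere_2[OF v0 x] by blast
  qed
  hence orbit: "k * m = card (sphere V E 2 v0) * j"
    using reg v0 by (simp add: regular_def)
  have paths: "k * (k - 1) = card (sphere V E 2 v0) * c2"
    using card_sphere_2_mult_c2[OF simple assms(1) reg v0] c2 v0 by (simp add: sphere_def)
  have "k * (m * c2) = card (sphere V E 2 v0) * j * c2"
    using orbit by (simp add: mult.assoc[symmetric])
  also have "\<dots> = k * ((k - 1) * j)"
    using paths by (simp add: mult_ac)
  finally show ?thesis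
    using assms(2) by (simp add: m_def j_def)
qed

lemma arc_stabiliser_transitive:
  assumes "triangle_free E" "k \<ge> 2"
    and c2: "\<forall>u\<in>V. \<forall>v\<in>V. gdist E u v = 2 \<longrightarrow> card (nbrs E u \<inter> nbrs E v) = c2"
    and "gcd c2 (k - 1) = 1"
    and "E v0 v1" "x \<in> nbrs E v1 - {v0}" "x' \<in> nbrs E v1 - {v0}"
  shows "\<exists>g\<in>G. g v0 = v0 \<and> g v1 = v1 \<and> g x = x'"
proof -
  define Orb where "Orb = {y. (v1, y) \<in> pair_orbit (stabiliser G v0) v1 x}"
  have Orb_eq: "Orb = {g x | g. g \<in> G \<and> g v0 = v0 \<and> g v1 = v1}"
    unfolding Orb_def pair_orbit_def stabiliser_def by (auto; metis)
  have sub: "Orb \<subseteq> nbrs E v1 - {v0}"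
  proof
    fix y assume "y \<in> Orb"
    then obtain g where g: "g \<in> G" "g v0 = v0" "g v1 = v1" "y = g x"
      unfolding Orb_eq by blast
    have "E v1 y" using aut_edge[OF g(1), of v1 x] assms(6) g(3,4) by (simp add: nbrs_def)
    moreover have "y \<noteq> v0"
      using injD[OF aut_inj[OF g(1)], of x v0] assms(6) g(2,4) by auto
    ultimately show "y \<in> nbrs E v1 - {v0}" by (simp add: nbrs_def)
  qed
  have "id \<in> G"
    using bij_group_aut by (simp add: bij_group_def)
  hence "x \<in> Orb"
    unfolding Orb_eq by (intro CollectI exI[of _ id]) simp
  have fin: "finite (nbrs E v1 - {v0})"
    using finite_nbrs[OF simple] by simp
  have card_nbrs: "card (nbrs E v1 - {v0}) = k - 1"
    using reg edge_in_V[OF simple assms(5)] edge_sym[OF simple assms(5)] finite_nbrs[OF simple]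
    by (simp add: regular_def nbrs_def)
  have "card Orb = k - 1"
  proof (rule eq_if_coprime_mult_eq)
    show "card Orb * c2 = (k - 1) * card {w. (w, x) \<in> pair_orbit (stabiliser G v0) v1 x}"
      using arc_stabiliser_orbit_count[OF assms(1) _ assms(5,6) c2] assms(2)
      unfolding Orb_def by simp
    show "coprime (k - 1) c2"
      using assms(4) by (simp add: coprime_iff_gcd_eq_1 gcd.commute)
    show "0 < card Orb"
      using \<open>x \<in> Orb\<close> finite_subset[OF sub fin] card_gt_0_iff by blast
    show "card Orb \<le> k - 1"
      using card_mono[OF fin sub] card_nbrs by simp
  qed
  hence "Orb = nbrs E v1 - {v0}"
    using card_subset_eq[OF fin sub] card_nbrs by simp
  hence "x' \<in> Orb"
    using assms(7) by simp
  then obtain g where "g \<in> G" "g v0 = v0" "g v1 = v1" "x' = g x"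
    unfolding Orb_eq by blast
  thus ?thesis by blast
qed

lemma two_arc_transitive_if_arc_stabiliser_transitive:
  assumes "\<And>v0 v1 x x'. E v0 v1 \<Longrightarrow> x \<in> nbrs E v1 - {v0} \<Longrightarrow> x' \<in> nbrs E v1 - {v0}
      \<Longrightarrow> \<exists>g\<in>G. g v0 = v0 \<and> g v1 = v1 \<and> g x = x'"
  shows "two_arc_transitive V E G"
  unfolding two_arc_transitive_def
proof (intro conjI allI impI)
  show "vertex_transitive V G"
    using dist_trans by (simp add: two_distance_transitive_def)
  fix u0 u1 u2 v0 v1 v2
  assume "two_arc E (u0, u1, u2)" "two_arc E (v0, v1, v2)"
  hence u: "E u0 u1" "E u1 u2" "u0 \<noteq> u2" and v: "E v0 v1" "E v1 v2" "v0 \<noteq> v2"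
    by (auto simp: two_arc_def)
  have "u0 \<in> V" "v0 \<in> V"
    using edge_in_V[OF simple u(1)] edge_in_V[OF simple v(1)] by auto
  then obtain g1 where g1: "g1 \<in> G" "g1 u0 = v0"
    using \<open>vertex_transitive V G\<close> unfolding vertex_transitive_def by blast
  obtain g2 where g2: "g2 \<in> G" "g2 v0 = v0" "g2 (g1 u1) = v1"
    using stabiliser_transitive_nbrs[of v0 "g1 u1" v1] aut_edge[OF g1(1) u(1)] g1(2) v(1)
    unfolding stabiliser_def by auto
  define h where "h = g2 \<circ> g1"
  have h: "h \<in> G" "h u0 = v0" "h u1 = v1"
    using bij_group_aut g1 g2 by (auto simp: h_def bij_group_def)
  have "h u2 \<in> nbrs E v1 - {v0}"
    using aut_edge[OF h(1) u(2)] injD[OF aut_inj[OF h(1)], of u2 u0] u(3) h(2,3)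
    by (auto simp: nbrs_def)
  then obtain g3 where g3: "g3 \<in> G" "g3 v0 = v0" "g3 v1 = v1" "g3 (h u2) = v2"
    using assms[OF v(1)] v(2,3) by (force simp: nbrs_def)
  have "g3 \<circ> h \<in> G"
    using bij_group_aut g3(1) h(1) by (simp add: bij_group_def)
  moreover have "(g3 \<circ> h) u0 = v0" "(g3 \<circ> h) u1 = v1" "(g3 \<circ> h) u2 = v2"
    using g3(2-4) h(2,3) by simp_all
  ultimately show "\<exists>g\<in>G. g u0 = v0 \<and> g u1 = v1 \<and> g u2 = v2"
    by blast
qed

end

theorem lemma5p7:
  fixes V :: "'a set" and E :: "'a \<Rightarrow> 'a \<Rightarrow> bool" and G :: "('a \<Rightarrow> 'a) set"
    and k c2 :: nat
  assumes "simple_graph V E" and "connected_graph V E"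
    and "aut_subgroup V E G"
    and "two_distance_transitive V E G"
    and "regular V E k" and "k \<ge> 2"
    and "\<forall>u\<in>V. \<forall>v\<in>V. gdist E u v = 2 \<longrightarrow> card (nbrs E u \<inter> nbrs E v) = c2"
    and "gcd c2 (k - 1) = 1"
  shows "girth V E = 3 \<or> two_arc_transitive V E G"
proof (cases "triangle_free E")
  case False
  then obtain a b c where "E a b" "E b c" "E c a"
    unfolding triangle_free_def by blast
  thus ?thesis using girth_eq_3_if_triangle[OF assms(1)] by blast
next
  case True
  interpret two_distance_transitive_graph V E G k
    using assms(1,3-5) by unfold_locales
  show ?thesis
    by (intro disjI2 two_arc_transitive_if_arc_stabiliser_transitive
        arc_stabiliser_transitive[OF True assms(6-8)])
qed

end
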